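(* Let $n \ge s \ge 1$ be integers and let $p$ be an odd prime. Let \[ F_p(x) = \sum_{k=0}^{s-1} \binom{n}{k+1} G_{k+1}\, p^k\, x^{s-1-k} \in \mathbf{Z}[x]. \] Then \[ G_n \equiv \sum_{j=0}^{p-1} (-1)^j j^{n-s} F_p(j) \pmod{p^s}. \]
   Context: The Bernoulli numbers $B_k$ are defined by $\frac{t}{e^t-1} = \sum_{k\ge 0} \frac{B_k}{k!} t^k$. The Genocchi numbers are $G_k = 2(1-2^k)B_k$; they are integers. Here $0^0 = 1$. *)

theory Defs
  imports "HOL-Computational_Algebra.Formal_Power_Series"
begin

definition bernoulli :: "nat \<Rightarrow> rat" where
  "bernoulli k = fact k * fps_nth (fps_X / (fps_exp 1 - 1)) k"

definition genocchi :: "nat \<Rightarrow> rat" where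
  "genocchi k = 2 * (1 - 2 ^ k) * bernoulli k"

definition F_poly :: "nat \<Rightarrow> nat \<Rightarrow> nat \<Rightarrow> rat \<Rightarrow> rat" where
  "F_poly n s p x = (\<Sum>k<s. of_nat (n choose (k+1)) * genocchi (k+1) * of_nat p ^ k * x ^ (s-1-k))"

end

theory Submission
  imports Defs
begin

(* Write B(t) = t/(e^t - 1) and G(t) = sum G_n t^n/n! for the exponential
   generating functions of the Bernoulli and Genocchi numbers.  Since G = 2 B(t) - 2 B(2t)
   and B(2t) (e^t + 1) = 2 B(t), one gets G(t) (e^t + 1) = 2t.  For odd p the alternating
   exponential sum S(t) = sum_{j<p} (-1)^j e^{jt} satisfies S(t) (e^t + 1) = 1 + e^{pt},
   hence G(pt) S(t) = p G(t).  Comparing coefficients of t^n/n! and using G_0 = 0 gives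
     G_n = sum_{k<n} C(n,k+1) p^k G_{k+1} A_{n-1-k},   A_m = sum_{j<p} (-1)^j j^m.
   The terms with k < s form exactly the sum over F_p, and every term with k >= s is
   p^s times an integer once we know that the Genocchi numbers are integers.  Integrality
   is shown separately for odd primes (2^n G_n is an integer, by the recurrence from
   G(t)(e^t+1) = 2t) and for the prime 2 (G_n has odd denominator, by expressing G_n
   through 2^i B_i = 2^(i-1) G_i / (1 - 2^i) for i < n). *)

unbundle fps_syntax

section \<open>Exponential generating functions\<close>

lemma egf_mult_nth:
  fixes f g :: "'a::field_char_0 fps"
  shows "fact n * (f * g) $ n =
    (\<Sum>i\<le>n. of_nat (n choose i) * (fact i * f $ i) * (fact (n - i) * g $ (n - i)))"
proof -
  have "fact n * (f * g) $ n = (\<Sum>i\<le>n. fact n * (f $ i * g $ (n - i)))"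
    by (simp add: fps_mult_nth sum_distrib_left atLeast0AtMost)
  also have "\<dots> = (\<Sum>i\<le>n. of_nat (n choose i) * (fact i * f $ i) * (fact (n - i) * g $ (n - i)))"
  proof (rule sum.cong)
    fix i assume "i \<in> {..n}"
    then have "(of_nat (n choose i) :: 'a) = fact n / (fact i * fact (n - i))"
      by (simp add: binomial_fact)
    then show "fact n * (f $ i * g $ (n - i)) =
        of_nat (n choose i) * (fact i * f $ i) * (fact (n - i) * g $ (n - i))"
      by (simp add: field_simps)
  qed simp
  finally show ?thesis .
qed

lemma egf_mult_exp_plus_one:
  fixes f :: "'a::field_char_0 fps"
  shows "fact n * (f * (fps_exp 1 + 1)) $ n =
    (\<Sum>i<n. of_nat (n choose i) * (fact i * f $ i)) + 2 * (fact n * f $ n)"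
proof -
  have coeff: "fact k * (fps_exp 1 + 1 :: 'a fps) $ k = (if k = 0 then 2 else 1)" for k
    by simp
  have "fact n * (f * (fps_exp 1 + 1)) $ n =
      (\<Sum>i\<in>insert n {..<n}. of_nat (n choose i) * (fact i * f $ i) * (if n - i = 0 then 2 else 1))"
    unfolding egf_mult_nth coeff by (intro sum.cong) auto
  also have "\<dots> = (\<Sum>i<n. of_nat (n choose i) * (fact i * f $ i)) + 2 * (fact n * f $ n)"
    by (simp add: algebra_simps)
  finally show ?thesis .
qed

text \<open>The substitution \<open>t \<mapsto> c t\<close>; it multiplies the \<open>n\<close>-th coefficient by \<open>c^n\<close>
  (library fact \<open>fps_nth_compose_linear\<close>).\<close>
abbreviation fps_dilate :: "'a::comm_ring_1 \<Rightarrow> 'a fps \<Rightarrow> 'a fps" where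
  "fps_dilate c f \<equiv> f oo (fps_const c * fps_X)"

lemma fps_dilate_mult: "fps_dilate c (f * g) = fps_dilate c f * fps_dilate (c::'a::idom) g"
  by (simp add: fps_compose_mult_distrib)

lemma fps_exp_minus_one_nonzero: "fps_exp (1::'a::field_char_0) - 1 \<noteq> 0"
proof
  assume "fps_exp (1::'a) - 1 = 0"
  then have "(fps_exp (1::'a) - 1) $ 1 = 0" by simp
  then show False by simp
qed

lemma fps_exp_plus_one_nonzero: "fps_exp (1::'a::field_char_0) + 1 \<noteq> 0"
proof
  assume "fps_exp (1::'a) + 1 = 0"
  then have "(fps_exp (1::'a) + 1) $ 0 = 0" by simp
  then show False by simp
qed

section \<open>The generating functions of the Bernoulli and Genocchi numbers\<close>

definition bernoulli_fps :: "rat fps" where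
  "bernoulli_fps = fps_X / (fps_exp 1 - 1)"

lemma bernoulli_fps_nth: "bernoulli_fps $ n = bernoulli n / fact n"
  by (simp add: bernoulli_fps_def bernoulli_def)

lemma bernoulli_fps_eq: "bernoulli_fps * (fps_exp 1 - 1) = fps_X"
proof -
  have "subdegree (fps_exp (1::rat) - 1) = 1"
    by (rule subdegreeI) auto
  moreover have "(fps_exp 1 - 1) dvd (fps_X :: rat fps) \<longleftrightarrow>
      subdegree (fps_exp (1::rat) - 1) \<le> subdegree (fps_X :: rat fps)"
    by (rule fps_dvd_iff[OF fps_exp_minus_one_nonzero]) simp
  ultimately have "(fps_exp 1 - 1) dvd (fps_X :: rat fps)"
    by simp
  then show ?thesis
    unfolding bernoulli_fps_def by (rule dvd_div_mult_self)
qed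

text \<open>Duplication: \<open>B(2t) (e^t + 1) = 2 B(t)\<close>, from \<open>e^{2t} - 1 = (e^t - 1)(e^t + 1)\<close>.\<close>
lemma bernoulli_fps_double: "fps_dilate 2 bernoulli_fps * (fps_exp 1 + 1) = fps_const 2 * bernoulli_fps"
proof -
  have exp_double: "fps_exp (2::rat) = fps_exp 1 * fps_exp 1"
    using fps_exp_add_mult[of "1::rat" 1] by simp
  have bernoulli_fps_double_eq:
    "fps_dilate 2 bernoulli_fps * (fps_exp 1 * fps_exp 1 - 1) = fps_const 2 * fps_X"
    using arg_cong[OF bernoulli_fps_eq, of "fps_dilate 2"]
    by (simp add: fps_dilate_mult fps_compose_sub_distrib exp_double)
  have "fps_dilate 2 bernoulli_fps * (fps_exp 1 + 1) * (fps_exp 1 - 1)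
      = fps_dilate 2 bernoulli_fps * (fps_exp 1 * fps_exp 1 - 1)"
    by (simp add: algebra_simps)
  also have "\<dots> = fps_const 2 * (bernoulli_fps * (fps_exp 1 - 1))"
    by (simp only: bernoulli_fps_double_eq bernoulli_fps_eq)
  finally show ?thesis
    using fps_exp_minus_one_nonzero by (simp add: mult.assoc)
qed

definition genocchi_fps :: "rat fps" where
  "genocchi_fps = Abs_fps (\<lambda>n. genocchi n / fact n)"

lemma genocchi_fps_nth: "fact n * genocchi_fps $ n = genocchi n"
  by (simp add: genocchi_fps_def)

lemma genocchi_fps_bernoulli:
  "genocchi_fps = fps_const 2 * bernoulli_fps - fps_const 2 * fps_dilate 2 bernoulli_fps"
proof (rule fps_ext)
  fix n
  have "fps_dilate 2 bernoulli_fps $ n = 2 ^ n * bernoulli_fps $ n"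
    by (rule fps_nth_compose_linear)
  then show "genocchi_fps $ n = (fps_const 2 * bernoulli_fps - fps_const 2 * fps_dilate 2 bernoulli_fps) $ n"
    by (simp add: genocchi_fps_def genocchi_def bernoulli_fps_nth field_simps)
qed

lemma genocchi_fps_eq: "genocchi_fps * (fps_exp 1 + 1) = fps_const 2 * fps_X"
proof -
  have ring_identity: "(c * B - c * D) * (E + 1) = c * (B * (E - 1))"
    if "D * (E + 1) = c * B" and "c = 2" for B D E c :: "rat fps"
  proof -
    have "(c * B - c * D) * (E + 1) = c * B * (E + 1) - c * (D * (E + 1))"
      by (simp add: algebra_simps)
    also have "\<dots> = c * (B * (E + 1 - c))"
      using that(1) by (simp add: algebra_simps)
    also have "E + 1 - c = E - 1"
      using that(2) by simp
    finally show ?thesis .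
  qed
  have "genocchi_fps * (fps_exp 1 + 1) = fps_const 2 * (bernoulli_fps * (fps_exp 1 - 1))"
    unfolding genocchi_fps_bernoulli
    by (rule ring_identity[OF bernoulli_fps_double]) (simp add: numeral_fps_const)
  then show ?thesis
    by (simp add: bernoulli_fps_eq)
qed

section \<open>Integrality of the Genocchi numbers\<close>

text \<open>Coefficients of \<open>G(t) (e^t + 1) = 2t\<close>.\<close>
lemma genocchi_recurrence:
  "(\<Sum>i<n. of_nat (n choose i) * genocchi i) + 2 * genocchi n = (if n = 1 then 2 else 0)"
proof -
  have "fact n * (fps_const 2 * fps_X :: rat fps) $ n = (if n = 1 then 2 else 0)"
    by (cases n) auto
  then show ?thesis
    using egf_mult_exp_plus_one[of n genocchi_fps] by (simp add: genocchi_fps_eq genocchi_fps_nth)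
qed

text \<open>Coefficients of \<open>B(2t) (e^t + 1) = 2 B(t)\<close>, solved for \<open>G_n\<close>.\<close>
lemma genocchi_bernoulli_sum: "genocchi n = (\<Sum>i<n. of_nat (n choose i) * (2 ^ i * bernoulli i))"
proof -
  have dilated: "fact i * fps_dilate 2 bernoulli_fps $ i = 2 ^ i * bernoulli i" for i
    by (simp add: bernoulli_fps_nth)
  have "(\<Sum>i<n. of_nat (n choose i) * (2 ^ i * bernoulli i)) + 2 * (2 ^ n * bernoulli n) = 2 * bernoulli n"
    using egf_mult_exp_plus_one[of n "fps_dilate 2 bernoulli_fps"]
    by (simp only: dilated bernoulli_fps_double) (simp add: bernoulli_fps_nth)
  then show ?thesis
    by (simp add: genocchi_def algebra_simps)
qed

lemma bernoulli_0: "bernoulli 0 = 1"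
proof -
  have "(bernoulli_fps * (fps_exp 1 - 1)) $ 1 = 1"
    by (simp add: bernoulli_fps_eq)
  then show ?thesis
    by (simp add: fps_mult_nth bernoulli_fps_nth)
qed

lemma genocchi_0: "genocchi 0 = 0"
  by (simp add: genocchi_def)

text \<open>Rational numbers with odd denominator (the localisation of \<open>\<int>\<close> at 2) form a ring
  closed under division by odd integers.\<close>
definition odd_denominator :: "rat \<Rightarrow> bool" where
  "odd_denominator x \<longleftrightarrow> (\<exists>c::int. odd c \<and> of_int c * x \<in> \<int>)"

lemma odd_denominator_Ints: "x \<in> \<int> \<Longrightarrow> odd_denominator x"
  unfolding odd_denominator_def by (rule exI[of _ 1]) simp

lemma odd_denominator_add:
  assumes "odd_denominator x" and "odd_denominator y"
  shows "odd_denominator (x + y)"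
proof -
  obtain a b :: int where ab: "odd a" "odd b" "of_int a * x \<in> \<int>" "of_int b * y \<in> \<int>"
    using assms unfolding odd_denominator_def by blast
  have "of_int (a * b) * (x + y) = of_int b * (of_int a * x) + of_int a * (of_int b * y)"
    by (simp add: algebra_simps)
  also have "\<dots> \<in> \<int>"
    by (rule Ints_add; rule Ints_mult) (use ab in auto)
  finally show ?thesis
    unfolding odd_denominator_def using ab by (intro exI[of _ "a * b"]) simp
qed

lemma odd_denominator_mult:
  assumes "odd_denominator x" and "odd_denominator y"
  shows "odd_denominator (x * y)"
proof -
  obtain a b :: int where ab: "odd a" "odd b" "of_int a * x \<in> \<int>" "of_int b * y \<in> \<int>"
    using assms unfolding odd_denominator_def by blast
  have "of_int (a * b) * (x * y) = (of_int a * x) * (of_int b * y)"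
    by (simp add: algebra_simps)
  also have "\<dots> \<in> \<int>"
    by (rule Ints_mult) (use ab in auto)
  finally show ?thesis
    unfolding odd_denominator_def using ab by (intro exI[of _ "a * b"]) simp
qed

lemma odd_denominator_sum:
  "(\<And>i. i \<in> A \<Longrightarrow> odd_denominator (f i)) \<Longrightarrow> odd_denominator (\<Sum>i\<in>A. f i)"
  by (induction A rule: infinite_finite_induct)
    (auto intro: odd_denominator_add odd_denominator_Ints)

lemma odd_denominator_divide:
  assumes "odd_denominator x" and "odd d"
  shows "odd_denominator (x / of_int d)"
proof -
  obtain c :: int where c: "odd c" "of_int c * x \<in> \<int>"
    using assms(1) unfolding odd_denominator_def by blast
  have "d \<noteq> 0"
    using assms(2) by auto
  then have "of_int (c * d) * (x / of_int d) = of_int c * x"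
    by simp
  then show ?thesis
    unfolding odd_denominator_def using c assms(2) by (intro exI[of _ "c * d"]) auto
qed

text \<open>A rational number with odd denominator whose product with a power of two is
  an integer is itself an integer (Bezout for \<open>2^n\<close> and the odd denominator).\<close>
lemma Ints_of_odd_denominator:
  assumes "odd_denominator x" and "2 ^ n * x \<in> \<int>"
  shows "x \<in> \<int>"
proof -
  obtain c :: int where c: "odd c" "of_int c * x \<in> \<int>"
    using assms(1) unfolding odd_denominator_def by blast
  have "coprime ((2::int) ^ n) c"
    using c(1) by simp
  then obtain u v :: int where uv: "u * 2 ^ n + v * c = 1"
    using bezout_int[of "2 ^ n" c] by (auto simp: coprime_iff_gcd_eq_1)
  have "x = of_int u * (2 ^ n * x) + of_int v * (of_int c * x)"
  proof -
    have "(of_int u * 2 ^ n + of_int v * of_int c :: rat) = 1"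
      using arg_cong[OF uv, of "of_int :: int \<Rightarrow> rat"] by simp
    then have "x = (of_int u * 2 ^ n + of_int v * of_int c) * x"
      by simp
    then show ?thesis
      by (simp add: algebra_simps)
  qed
  also have "\<dots> \<in> \<int>"
    by (rule Ints_add; rule Ints_mult) (use assms(2) c(2) in auto)
  finally show ?thesis .
qed

text \<open>Inverting the definition of the Genocchi numbers: the divisor \<open>1 - 2^i\<close> is odd.\<close>
lemma bernoulli_by_genocchi:
  assumes "i \<ge> 1"
  shows "2 ^ i * bernoulli i = 2 ^ (i - 1) * genocchi i / of_int (1 - 2 ^ i)"
proof -
  have "(2::rat) ^ i = 2 * 2 ^ (i - 1)"
    using assms by (simp flip: power_Suc)
  moreover have "(1::rat) < 2 ^ i"
    using assms by (intro one_less_power) auto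
  ultimately show ?thesis
    by (simp add: genocchi_def field_simps)
qed

lemma genocchi_odd_denominator: "odd_denominator (genocchi n)"
proof (induction n rule: less_induct)
  case (less n)
  have bernoulli_terms: "odd_denominator (2 ^ i * bernoulli i)" if "i < n" for i
  proof (cases "i = 0")
    case True
    then show ?thesis
      by (simp add: bernoulli_0 odd_denominator_Ints)
  next
    case False
    have "odd_denominator (2 ^ (i - 1) * genocchi i)"
      using less[OF \<open>i < n\<close>] by (intro odd_denominator_mult[OF odd_denominator_Ints]) auto
    then show ?thesis
      using odd_denominator_divide[of _ "1 - 2 ^ i"] False by (simp add: bernoulli_by_genocchi)
  qed
  show ?case
    unfolding genocchi_bernoulli_sum[of n]
    by (rule odd_denominator_sum, rule odd_denominator_mult[OF odd_denominator_Ints])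
      (auto intro: bernoulli_terms)
qed

text \<open>The odd part: only powers of two enter the denominators in \<open>genocchi_recurrence\<close>.\<close>
lemma genocchi_pow2_Ints: "2 ^ n * genocchi n \<in> \<int>"
proof (induction n rule: less_induct)
  case (less n)
  show ?case
  proof (cases n)
    case 0
    then show ?thesis
      by (simp add: genocchi_0)
  next
    case (Suc m)
    have "2 ^ n * genocchi n = 2 ^ m * (2 * genocchi n)"
      using Suc by simp
    also have "\<dots> = 2 ^ m * (if n = 1 then 2 else 0) - 2 ^ m * (\<Sum>i<n. of_nat (n choose i) * genocchi i)"
    proof -
      have "2 * genocchi n = (if n = 1 then 2 else 0) - (\<Sum>i<n. of_nat (n choose i) * genocchi i)"
        using genocchi_recurrence[of n] by linarith
      then show ?thesis
        by (simp only: right_diff_distrib)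
    qed
    also have "2 ^ m * (\<Sum>i<n. of_nat (n choose i) * genocchi i)
        = (\<Sum>i<n. of_nat (n choose i) * 2 ^ (m - i) * (2 ^ i * genocchi i))"
      unfolding sum_distrib_left
    proof (rule sum.cong)
      fix i assume "i \<in> {..<n}"
      then have "(2::rat) ^ m = 2 ^ (m - i) * 2 ^ i"
        using Suc by (simp flip: power_add)
      then show "2 ^ m * (of_nat (n choose i) * genocchi i)
          = of_nat (n choose i) * 2 ^ (m - i) * (2 ^ i * genocchi i)"
        by (simp add: algebra_simps)
    qed simp
    also have "2 ^ m * (if n = 1 then 2 else 0) - \<dots> \<in> \<int>"
      by (rule Ints_diff, simp, rule Ints_sum, rule Ints_mult) (auto intro: less.IH)
    finally show ?thesis .
  qed
qed

lemma genocchi_Ints: "genocchi n \<in> \<int>"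
  using Ints_of_odd_denominator[OF genocchi_odd_denominator genocchi_pow2_Ints] .

section \<open>The dilation identity for odd \<open>p\<close>\<close>

definition alt_exp_sum :: "nat \<Rightarrow> rat fps" where
  "alt_exp_sum m = (\<Sum>j<m. fps_const ((-1) ^ j) * fps_exp (of_nat j))"

definition alt_power_sum :: "nat \<Rightarrow> nat \<Rightarrow> rat" where
  "alt_power_sum m k = (\<Sum>j<m. (-1) ^ j * of_nat j ^ k)"

lemma alt_exp_sum_nth: "fact k * alt_exp_sum m $ k = alt_power_sum m k"
  by (simp add: alt_exp_sum_def alt_power_sum_def fps_sum_nth sum_distrib_left)

text \<open>Multiplying by \<open>e^t + 1\<close> telescopes the alternating sum.\<close>
lemma alt_exp_sum_telescope:
  "alt_exp_sum m * (fps_exp 1 + 1) = 1 - fps_const ((-1) ^ m) * fps_exp (of_nat m)"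
proof (induction m)
  case 0
  show ?case
    by (simp add: alt_exp_sum_def)
next
  case (Suc m)
  have exp_shift: "fps_exp (of_nat m) * fps_exp 1 = fps_exp (of_nat (Suc m) :: rat)"
    by (simp flip: fps_exp_add_mult add: add.commute)
  have "alt_exp_sum (Suc m) * (fps_exp 1 + 1) = alt_exp_sum m * (fps_exp 1 + 1)
      + fps_const ((-1) ^ m) * (fps_exp (of_nat m) * fps_exp 1) + fps_const ((-1) ^ m) * fps_exp (of_nat m)"
    by (simp add: alt_exp_sum_def algebra_simps)
  also have "\<dots> = 1 + fps_const ((-1) ^ m) * fps_exp (of_nat (Suc m))"
    by (simp only: Suc.IH exp_shift) simp
  finally show ?case
    by (simp flip: fps_const_neg)
qed

text \<open>The key identity \<open>G(pt) S_p(t) = p G(t)\<close>: both sides times \<open>e^t + 1\<close> equal \<open>2pt\<close>.\<close>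
lemma genocchi_fps_dilate:
  assumes "odd p"
  shows "fps_dilate (of_nat p) genocchi_fps * alt_exp_sum p = fps_const (of_nat p) * genocchi_fps"
proof -
  have sign: "fps_const ((-1::rat) ^ p) = - 1"
    using assms by (simp flip: fps_const_neg)
  have telescope: "alt_exp_sum p * (fps_exp 1 + 1) = fps_dilate (of_nat p) (fps_exp 1 + 1)"
    using alt_exp_sum_telescope[of p] by (simp add: sign fps_compose_add_distrib)
  have "fps_dilate (of_nat p) genocchi_fps * alt_exp_sum p * (fps_exp 1 + 1)
      = fps_dilate (of_nat p) genocchi_fps * fps_dilate (of_nat p) (fps_exp 1 + 1)"
    by (simp only: mult.assoc telescope)
  also have "\<dots> = fps_dilate (of_nat p) (fps_const 2 * fps_X)"
    by (simp flip: fps_dilate_mult add: genocchi_fps_eq)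
  also have "\<dots> = fps_const (of_nat p) * genocchi_fps * (fps_exp 1 + 1)"
    by (simp add: mult.assoc genocchi_fps_eq fps_compose_mult_distrib mult.left_commute)
  finally show ?thesis
    using fps_exp_plus_one_nonzero[where 'a = rat] by simp
qed

lemma genocchi_dilate_coeff:
  assumes "odd p"
  shows "of_nat p * genocchi n
    = (\<Sum>i\<le>n. of_nat (n choose i) * (of_nat p ^ i * genocchi i) * alt_power_sum p (n - i))"
proof -
  have "of_nat p * genocchi n = fact n * (fps_dilate (of_nat p) genocchi_fps * alt_exp_sum p) $ n"
    by (simp add: genocchi_fps_dilate[OF assms] genocchi_fps_nth mult.left_commute)
  also have "\<dots> = (\<Sum>i\<le>n. of_nat (n choose i) * (of_nat p ^ i * genocchi i) * alt_power_sum p (n - i))"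
    by (simp only: egf_mult_nth alt_exp_sum_nth fps_nth_compose_linear mult.left_commute[of "fact _"]
        genocchi_fps_nth)
  finally show ?thesis .
qed

text \<open>Dropping the vanishing term \<open>i = 0\<close> and dividing by \<open>p\<close>.\<close>
lemma genocchi_expansion:
  assumes "odd p"
  shows "genocchi n = (\<Sum>k<n. of_nat (n choose (k + 1)) * (of_nat p ^ k * genocchi (k + 1))
                                 * alt_power_sum p (n - 1 - k))"
proof (cases n)
  case 0
  then show ?thesis
    by (simp add: genocchi_0)
next
  case (Suc m)
  have "p \<noteq> 0"
    using odd_pos[OF assms] by simp
  have "of_nat p * genocchi n
      = (\<Sum>k\<le>m. of_nat (n choose Suc k) * (of_nat p ^ Suc k * genocchi (Suc k)) * alt_power_sum p (n - Suc k))"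
    using genocchi_dilate_coeff[OF assms, of n] unfolding Suc sum.atMost_Suc_shift
    by (simp add: genocchi_0)
  also have "\<dots> = of_nat p * (\<Sum>k<n. of_nat (n choose (k + 1)) * (of_nat p ^ k * genocchi (k + 1))
                                 * alt_power_sum p (n - 1 - k))"
    unfolding sum_distrib_left Suc lessThan_Suc_atMost by (intro sum.cong) (auto simp: algebra_simps)
  finally show ?thesis
    using \<open>p \<noteq> 0\<close> by simp
qed

section \<open>The congruence\<close>

lemma alt_power_sum_Ints: "alt_power_sum m k \<in> \<int>"
  unfolding alt_power_sum_def by (intro Ints_sum Ints_mult Ints_power) auto

text \<open>The sum over \<open>F_p\<close> is the truncation of \<open>genocchi_expansion\<close> to \<open>k < s\<close>.\<close>
lemma alternating_F_poly_sum:
  assumes "s \<le> n"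
  shows "(\<Sum>j<p. (-1) ^ j * of_nat j ^ (n - s) * F_poly n s p (of_nat j))
       = (\<Sum>k<s. of_nat (n choose (k + 1)) * (of_nat p ^ k * genocchi (k + 1)) * alt_power_sum p (n - 1 - k))"
proof -
  have powers: "(of_nat j :: rat) ^ (n - s) * of_nat j ^ (s - 1 - k) = of_nat j ^ (n - 1 - k)"
    if "k \<in> {..<s}" for j k
  proof -
    have "n - s + (s - 1 - k) = n - 1 - k"
      using that assms by auto
    then show ?thesis
      by (simp flip: power_add)
  qed
  have "(\<Sum>j<p. (-1) ^ j * of_nat j ^ (n - s) * F_poly n s p (of_nat j))
      = (\<Sum>j<p. \<Sum>k<s. of_nat (n choose (k + 1)) * (of_nat p ^ k * genocchi (k + 1))
                          * ((-1) ^ j * (of_nat j ^ (n - s) * of_nat j ^ (s - 1 - k))))"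
    unfolding F_poly_def sum_distrib_left by (intro sum.cong refl) (simp add: algebra_simps)
  also have "\<dots> = (\<Sum>k<s. \<Sum>j<p. of_nat (n choose (k + 1)) * (of_nat p ^ k * genocchi (k + 1))
                          * ((-1) ^ j * of_nat j ^ (n - 1 - k)))"
    by (subst sum.swap) (intro sum.cong refl, simp only: powers)
  also have "\<dots> = (\<Sum>k<s. of_nat (n choose (k + 1)) * (of_nat p ^ k * genocchi (k + 1))
                          * alt_power_sum p (n - 1 - k))"
    by (simp add: alt_power_sum_def sum_distrib_left)
  finally show ?thesis .
qed

text \<open>The remaining terms \<open>k \<ge> s\<close> of the expansion carry the factor \<open>p^s\<close>.\<close>
theorem proposition2:
  fixes n s p :: nat
  assumes "1 \<le> s" and "s \<le> n" and "prime p" and "odd p"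
  shows "\<exists>m::int. genocchi n - (\<Sum>j<p. (-1) ^ j * of_nat j ^ (n - s) * F_poly n s p (of_nat j))
           = of_int (int p ^ s * m)"
proof -
  define T where "T k = of_nat (n choose (k + 1)) * (of_nat p ^ k * genocchi (k + 1))
                          * alt_power_sum p (n - 1 - k)" for k
  define Q where "Q = (\<Sum>k=s..<n. of_nat (n choose (k + 1))
                     * (of_nat p ^ (k - s) * genocchi (k + 1)) * alt_power_sum p (n - 1 - k))"
  have expansion: "genocchi n = (\<Sum>k<s. T k) + (\<Sum>k=s..<n. T k)"
    using genocchi_expansion[OF assms(4), of n] assms(2)
    by (simp add: T_def lessThan_atLeast0 sum.atLeastLessThan_concat)
  have head: "(\<Sum>j<p. (-1) ^ j * of_nat j ^ (n - s) * F_poly n s p (of_nat j)) = (\<Sum>k<s. T k)"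
    unfolding T_def by (rule alternating_F_poly_sum[OF assms(2)])
  have tail: "(\<Sum>k=s..<n. T k) = of_nat p ^ s * Q"
    unfolding Q_def sum_distrib_left T_def
    by (intro sum.cong refl) (simp add: algebra_simps flip: power_add)
  have "Q \<in> \<int>"
    unfolding Q_def by (intro Ints_sum Ints_mult Ints_power genocchi_Ints alt_power_sum_Ints Ints_of_nat)
  then obtain m :: int where "Q = of_int m"
    by (rule Ints_cases)
  then show ?thesis
    by (intro exI[of _ m]) (simp add: expansion head tail)
qed

end
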